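(* Let $F$ be a field, $A$ a set, and $E$ a thin set of functions $A\to F$. Then the thinly independent subsets of $E$ form the independent sets of a matroid on $E$.
   Context: A set $X$ of functions $A\to F$ is thin if for every $a\in A$ only finitely many $x\in X$ satisfy $x(a)\neq 0$; for thin $X$ and coefficients $\alpha_x\in F$, $\sum_{x\in X}\alpha_x x$ denotes the pointwise sum (well defined by thinness). A set of functions $A\to F$ is thinly independent if for every thin subset $X$ and every family $(\alpha_x)_{x\in X}$ of elements of $F$, $\sum_{x\in X}\alpha_x x=\mathbf 0$ implies $\alpha_x=0$ for all $x\in X$. Matroids may be infinite: a matroid on $E$ is a family $\mathcal I\subseteq 2^E$ (the independent sets) with (I1) $\emptyset\in\mathcal I$; (I2) $\mathcal I$ closed under subsets; (I3) for every non-maximal $I\in\mathcal I$ and maximal $I'\in\mathcal I$ there is $x\in I'\setminus I$ with $I\cup\{x\}\in\mathcal I$; (IM) whenever $I\subseteq X\subseteq E$ and $I\in\mathcal I$, the set $\{I'\in\mathcal I:I\subseteq I'\subseteq X\}$ has a maximal element. *)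

theory Defs
  imports Main
begin

definition thin :: "('a \<Rightarrow> 'f::zero) set \<Rightarrow> bool" where
  "thin X \<longleftrightarrow> (\<forall>a. finite {x \<in> X. x a \<noteq> 0})"

definition thin_sum :: "('a \<Rightarrow> 'f::field) set \<Rightarrow> (('a \<Rightarrow> 'f) \<Rightarrow> 'f) \<Rightarrow> 'a \<Rightarrow> 'f" where
  "thin_sum X \<alpha> = (\<lambda>a. \<Sum>x\<in>{x \<in> X. x a \<noteq> 0}. \<alpha> x * x a)"

definition thinly_independent :: "('a \<Rightarrow> 'f::field) set \<Rightarrow> bool" where
  "thinly_independent S \<longleftrightarrow>
     (\<forall>X \<alpha>. X \<subseteq> S \<longrightarrow> thin X \<longrightarrow> thin_sum X \<alpha> = (\<lambda>a. 0) \<longrightarrow> (\<forall>x\<in>X. \<alpha> x = 0))"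

definition maximal_in :: "'b set set \<Rightarrow> 'b set \<Rightarrow> bool" where
  "maximal_in \<F> M \<longleftrightarrow> M \<in> \<F> \<and> (\<forall>N\<in>\<F>. M \<subseteq> N \<longrightarrow> N = M)"

text \<open>(Possibly infinite) matroid on E given by its independent sets, axioms (I1),(I2),(I3),(IM).\<close>
definition matroid :: "'b set \<Rightarrow> 'b set set \<Rightarrow> bool" where
  "matroid E \<I> \<longleftrightarrow>
     (\<forall>I\<in>\<I>. I \<subseteq> E) \<and>
     {} \<in> \<I> \<and>
     (\<forall>I J. I \<in> \<I> \<longrightarrow> J \<subseteq> I \<longrightarrow> J \<in> \<I>) \<and>
     (\<forall>I I'. I \<in> \<I> \<longrightarrow> \<not> maximal_in \<I> I \<longrightarrow> maximal_in \<I> I' \<longrightarrow>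
         (\<exists>x\<in>I' - I. insert x I \<in> \<I>)) \<and>
     (\<forall>I X. I \<in> \<I> \<longrightarrow> I \<subseteq> X \<longrightarrow> X \<subseteq> E \<longrightarrow>
         (\<exists>M. maximal_in {I'\<in>\<I>. I \<subseteq> I' \<and> I' \<subseteq> X} M))"

end

theory Submission
  imports Defs HOL.Vector_Spaces "HOL-Library.Function_Algebras"
begin

(*
  View each a in A as the column vector (x a)_(x in E) of F^E, and let e_x be the unit
  vectors. For S a subset of E, thin relations sum_(x in S) alpha_x x = 0 correspond,
  via alpha_x = g e_x, to linear functionals g vanishing on all columns and on the e_x
  with x not in S (thinness makes each column a finite combination of unit vectors).
  Hence S is thinly independent iff every e_x lies in the span of the columns together
  with the e_x, x not in S; that is, iff E - S is spanning in the finitary matroid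
  represented by the e_x modulo the columns. Complements of spanning sets of such a
  matroid satisfy (I3) by the Steinitz exchange, and (IM) by extending a basis of
  span(columns, e_x for x not in X) to one of span(columns, e_x for x not in I).
*)

context vector_space
begin

text \<open>The independent sets of the dual of the matroid represented by \<open>d\<close> in the
  quotient of the space by \<open>span W\<close>.\<close>
definition coindep :: "'b set \<Rightarrow> ('c \<Rightarrow> 'b) \<Rightarrow> 'c set \<Rightarrow> 'c set set" where
  "coindep W d E = {S. S \<subseteq> E \<and> d ` E \<subseteq> span (W \<union> d ` (E - S))}"

lemma coindep_insert:
  assumes "S \<in> coindep W d E" "z \<in> E" "d z \<in> span (W \<union> d ` (E - S - {z}))"
  shows "insert z S \<in> coindep W d E"
proof -
  have "d ` E \<subseteq> span (W \<union> d ` (E - S))"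
    using assms(1) by (simp add: coindep_def)
  also have "\<dots> \<subseteq> span (insert (d z) (W \<union> d ` (E - S - {z})))"
    by (rule span_mono) blast
  also have "\<dots> = span (W \<union> d ` (E - S - {z}))"
    using assms(3) by (rule span_redundant)
  also have "E - S - {z} = E - insert z S"
    by blast
  finally show ?thesis
    using assms(1,2) by (simp add: coindep_def)
qed

lemma in_span_Un_image_finite:
  assumes "x \<in> span (W \<union> d ` T)"
  obtains T' where "finite T'" "T' \<subseteq> T" "x \<in> span (W \<union> d ` T')"
proof -
  obtain t r where x: "x = (\<Sum>a\<in>t. r a *s a)" and t: "finite t" "t \<subseteq> W \<union> d ` T"
    using assms unfolding span_explicit by blast
  obtain T' where T': "T' \<subseteq> T" "finite T'" "t \<inter> d ` T = d ` T'"
    using finite_subset_image[of "t \<inter> d ` T" d T] t(1) by blast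
  have "x \<in> span t"
    unfolding x by (intro span_sum span_scale span_base)
  moreover have "span t \<subseteq> span (W \<union> d ` T')"
    using t(2) T'(3) by (intro span_mono) blast
  ultimately show ?thesis
    using that T' by blast
qed

lemma span_exchange_outside:
  assumes indep: "\<forall>z\<in>B. d z \<notin> span (W \<union> d ` (B - {z}))"
    and "finite T" "y \<in> B" "y \<notin> T" "d y \<in> span (W \<union> d ` T)"
  shows "\<exists>t\<in>T - B. d t \<in> span (W \<union> d ` (insert y T - {t}))"
  using assms(2-)
proof (induction "card (T - B)" arbitrary: T rule: less_induct)
  case less
  show ?case
  proof (cases "T \<subseteq> B")
    case True
    then have "d y \<in> span (W \<union> d ` (B - {y}))"
      using less.prems span_mono[of "W \<union> d ` T" "W \<union> d ` (B - {y})"] by blast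
    then show ?thesis
      using indep less.prems by blast
  next
    case False
    then obtain t where t: "t \<in> T" "t \<notin> B" by blast
    show ?thesis
    proof (cases "d y \<in> span (W \<union> d ` (T - {t}))")
      case True
      have "card (T - {t} - B) < card (T - B)"
        using less.prems t by (intro psubset_card_mono) auto
      then obtain t' where t': "t' \<in> T - {t} - B"
          "d t' \<in> span (W \<union> d ` (insert y (T - {t}) - {t'}))"
        using less.hyps[of "T - {t}"] less.prems True by auto
      have "span (W \<union> d ` (insert y (T - {t}) - {t'})) \<subseteq> span (W \<union> d ` (insert y T - {t'}))"
        by (intro span_mono) blast
      then show ?thesis
        using t' by blast
    next
      case False
      have "y \<noteq> t"
        using less.prems(2) t(2) by blast
      have "W \<union> d ` T = insert (d t) (W \<union> d ` (T - {t}))"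
        using t(1) by blast
      then have "d y \<in> span (insert (d t) (W \<union> d ` (T - {t})))"
        using less.prems(4) by simp
      from in_span_insert[OF this False]
      have "d t \<in> span (insert (d y) (W \<union> d ` (T - {t})))" .
      also have "insert (d y) (W \<union> d ` (T - {t})) = W \<union> d ` (insert y T - {t})"
        using \<open>y \<noteq> t\<close> by (simp add: insert_Diff_if)
      finally show ?thesis
        using t by blast
    qed
  qed
qed

lemma coindep_augment:
  assumes I: "I \<in> coindep W d E" and J: "J \<in> coindep W d E" "I \<subset> J"
    and I': "maximal_in (coindep W d E) I'"
  shows "\<exists>x\<in>I' - I. insert x I \<in> coindep W d E"
proof -
  obtain y where y: "y \<in> J" "y \<notin> I"
    using J(2) by blast
  have "y \<in> E"
    using J(1) y(1) by (auto simp: coindep_def)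
  have "d y \<in> span (W \<union> d ` (E - J))"
    using J(1) \<open>y \<in> E\<close> by (auto simp: coindep_def)
  moreover have "span (W \<union> d ` (E - J)) \<subseteq> span (W \<union> d ` (E - I - {y}))"
    using J(2) y by (intro span_mono) blast
  ultimately have y_span: "d y \<in> span (W \<union> d ` (E - I - {y}))"
    by blast
  show ?thesis
  proof (cases "y \<in> I'")
    case True
    then show ?thesis
      using coindep_insert[OF I \<open>y \<in> E\<close> y_span] y(2) by blast
  next
    case False
    have indep: "\<forall>z\<in>E - I'. d z \<notin> span (W \<union> d ` (E - I' - {z}))"
    proof (intro ballI notI)
      fix z
      assume "z \<in> E - I'" "d z \<in> span (W \<union> d ` (E - I' - {z}))"
      then have "insert z I' \<in> coindep W d E"
        using I' coindep_insert by (auto simp: maximal_in_def)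
      then show False
        using I' \<open>z \<in> E - I'\<close> by (auto simp: maximal_in_def)
    qed
    obtain T where T: "finite T" "T \<subseteq> E - I - {y}" "d y \<in> span (W \<union> d ` T)"
      using y_span by (rule in_span_Un_image_finite)
    then obtain t where t: "t \<in> T - (E - I')" "d t \<in> span (W \<union> d ` (insert y T - {t}))"
      using span_exchange_outside[OF indep, of T y] False \<open>y \<in> E\<close> by blast
    have "span (W \<union> d ` (insert y T - {t})) \<subseteq> span (W \<union> d ` (E - I - {t}))"
      using T(2) y(2) \<open>y \<in> E\<close> by (intro span_mono) blast
    then have "insert t I \<in> coindep W d E"
      using coindep_insert[OF I] t T(2) by blast
    moreover have "t \<in> I' - I"
      using t(1) T(2) by blast
    ultimately show ?thesis
      by blast
  qed
qed

lemma coindep_diff_extension: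
  assumes I: "I \<in> coindep W d E" "I \<subseteq> X" and "X \<subseteq> E"
    and B0: "B0 \<subseteq> span (W \<union> d ` (E - X))" "W \<union> d ` (E - X) \<subseteq> span B0"
    and B1: "B0 \<subseteq> B1" "d ` (X - I) \<subseteq> span B1"
    and K: "K \<subseteq> X" "B1 - B0 \<subseteq> d ` K"
  shows "X - K \<in> coindep W d E"
proof -
  have B0_B1: "span B0 \<subseteq> span B1"
    using B1(1) by (rule span_mono)
  have "d ` E \<subseteq> span (W \<union> d ` (E - I))"
    using I(1) by (simp add: coindep_def)
  also have "\<dots> \<subseteq> span B1"
  proof (rule span_minimal[OF _ subspace_span])
    have "E - I = (E - X) \<union> (X - I)"
      using I(2) \<open>X \<subseteq> E\<close> by blast
    then show "W \<union> d ` (E - I) \<subseteq> span B1"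
      using B0(2) B0_B1 B1(2) by blast
  qed
  also have "\<dots> \<subseteq> span (W \<union> d ` (E - (X - K)))"
  proof (rule span_minimal[OF _ subspace_span])
    have "span (W \<union> d ` (E - X)) \<subseteq> span (W \<union> d ` (E - (X - K)))"
      by (intro span_mono) blast
    with B0(1) have "B0 \<subseteq> span (W \<union> d ` (E - (X - K)))"
      by (rule subset_trans)
    moreover have "d ` K \<subseteq> W \<union> d ` (E - (X - K))"
      using K(1) \<open>X \<subseteq> E\<close> by blast
    then have "B1 - B0 \<subseteq> span (W \<union> d ` (E - (X - K)))"
      using K(2) span_superset by (blast intro: subset_trans)
    ultimately show "B1 \<subseteq> span (W \<union> d ` (E - (X - K)))"
      by blast
  qed
  finally show ?thesis
    using \<open>X \<subseteq> E\<close> by (auto simp: coindep_def)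
qed

lemma coindep_diff_extension_maximal:
  assumes inj: "inj_on d E" and "X \<subseteq> E"
    and B0: "W \<union> d ` (E - X) \<subseteq> span B0"
    and B1: "B0 \<subseteq> B1" "independent B1"
    and K: "K \<subseteq> X" "d ` K \<subseteq> B1 - B0"
    and J: "J \<in> coindep W d E" "J \<subseteq> X" "X - K \<subseteq> J"
  shows "J = X - K"
proof (rule ccontr)
  assume "J \<noteq> X - K"
  then obtain e where e: "e \<in> J" "e \<in> K"
    using J(2,3) by blast
  have "d e \<in> span (W \<union> d ` (E - J))"
    using J(1) e(1) by (auto simp: coindep_def)
  also have "\<dots> \<subseteq> span (B1 - {d e})"
  proof (rule span_minimal[OF _ subspace_span])
    have "d e \<notin> B0"
      using e(2) K(2) by blast
    then have "span B0 \<subseteq> span (B1 - {d e})"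
      using B1(1) by (intro span_mono) blast
    then have "W \<union> d ` (E - X) \<subseteq> span (B1 - {d e})"
      using B0 by (rule subset_trans[rotated])
    then have W_span: "W \<subseteq> span (B1 - {d e})" and X_span: "d ` (E - X) \<subseteq> span (B1 - {d e})"
      by simp_all
    have K_span: "d ` (K - {e}) \<subseteq> span (B1 - {d e})"
    proof
      fix v
      assume "v \<in> d ` (K - {e})"
      then obtain f where f: "f \<in> K" "f \<noteq> e" "v = d f"
        by blast
      have "d f \<noteq> d e"
        using inj_onD[OF inj] f(1,2) e(2) K(1) \<open>X \<subseteq> E\<close> by blast
      then show "v \<in> span (B1 - {d e})"
        using f K(2) by (blast intro: span_base)
    qed
    have "E - J \<subseteq> (E - X) \<union> (K - {e})"
      using J(3) e(1) by blast
    then have "d ` (E - J) \<subseteq> d ` (E - X) \<union> d ` (K - {e})"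
      by blast
    then show "W \<union> d ` (E - J) \<subseteq> span (B1 - {d e})"
      by (rule Un_least[OF W_span subset_trans[OF _ Un_least[OF X_span K_span]]])
  qed
  finally have "d e \<in> span (B1 - {d e})" .
  moreover have "d e \<in> B1"
    using e(2) K(2) by blast
  ultimately show False
    using B1(2) unfolding dependent_def by blast
qed

lemma coindep_has_maximal:
  assumes inj: "inj_on d E" and I: "I \<in> coindep W d E" "I \<subseteq> X" and "X \<subseteq> E"
  shows "\<exists>M. maximal_in {J \<in> coindep W d E. I \<subseteq> J \<and> J \<subseteq> X} M"
proof -
  obtain B0 where B0: "B0 \<subseteq> span (W \<union> d ` (E - X))" "independent B0"
      "span (W \<union> d ` (E - X)) \<subseteq> span B0"
    by (rule maximal_independent_subset)
  obtain B1 where B1: "B0 \<subseteq> B1" "B1 \<subseteq> B0 \<union> d ` (X - I)" "independent B1"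
      "B0 \<union> d ` (X - I) \<subseteq> span B1"
    using maximal_independent_subset_extend[OF _ B0(2), of "B0 \<union> d ` (X - I)"] by blast
  have B0_span: "W \<union> d ` (E - X) \<subseteq> span B0"
    using span_superset B0(3) by (rule subset_trans)
  have B1_span: "d ` (X - I) \<subseteq> span B1"
    using B1(4) by blast
  define K where "K = {e \<in> X - I. d e \<in> B1 - B0}"
  have K_X: "K \<subseteq> X" and K_B: "d ` K \<subseteq> B1 - B0"
    unfolding K_def by blast+
  have B_K: "B1 - B0 \<subseteq> d ` K"
    using B1(2) unfolding K_def by blast
  have "X - K \<in> coindep W d E"
    using I \<open>X \<subseteq> E\<close> B0(1) B0_span B1(1) B1_span K_X B_K by (rule coindep_diff_extension)
  moreover have "I \<subseteq> X - K"
    using I(2) unfolding K_def by blast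
  moreover have "J = X - K" if "J \<in> coindep W d E" "J \<subseteq> X" "X - K \<subseteq> J" for J
    using inj \<open>X \<subseteq> E\<close> B0_span B1(1,3) K_X K_B that by (rule coindep_diff_extension_maximal)
  ultimately have "maximal_in {J \<in> coindep W d E. I \<subseteq> J \<and> J \<subseteq> X} (X - K)"
    unfolding maximal_in_def by blast
  then show ?thesis
    by blast
qed

theorem matroid_coindep:
  assumes "inj_on d E"
  shows "matroid E (coindep W d E)"
  unfolding matroid_def
proof (intro conjI allI impI ballI)
  fix I
  assume "I \<in> coindep W d E"
  then show "I \<subseteq> E"
    by (simp add: coindep_def)
next
  show "{} \<in> coindep W d E"
    by (auto simp: coindep_def intro: span_base)
next
  fix I J
  assume I: "I \<in> coindep W d E" and "J \<subseteq> I"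
  then have "span (W \<union> d ` (E - I)) \<subseteq> span (W \<union> d ` (E - J))"
    by (intro span_mono) blast
  with I \<open>J \<subseteq> I\<close> show "J \<in> coindep W d E"
    by (auto simp: coindep_def)
next
  fix I I'
  assume I: "I \<in> coindep W d E" "\<not> maximal_in (coindep W d E) I"
    and I': "maximal_in (coindep W d E) I'"
  obtain J where "J \<in> coindep W d E" "I \<subset> J"
    using I unfolding maximal_in_def by blast
  then show "\<exists>x\<in>I' - I. insert x I \<in> coindep W d E"
    by (rule coindep_augment[OF I(1) _ _ I'])
next
  fix I X
  assume "I \<in> coindep W d E" "I \<subseteq> X" "X \<subseteq> E"
  with assms show "\<exists>M. maximal_in {J \<in> coindep W d E. I \<subseteq> J \<and> J \<subseteq> X} M"
    by (rule coindep_has_maximal)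
qed

end

lemma (in vector_space_pair) linear_vanishing_on_span_exists:
  assumes "v \<notin> vs1.span U"
  shows "\<exists>g. Vector_Spaces.linear s1 s2 g \<and> (\<forall>u\<in>vs1.span U. g u = 0) \<and> g v = w"
proof -
  obtain B where B: "B \<subseteq> vs1.span U" "vs1.independent B" "vs1.span U \<subseteq> vs1.span B"
    by (rule vs1.maximal_independent_subset)
  have "vs1.span B \<subseteq> vs1.span U"
    using B(1) vs1.subspace_span by (rule vs1.span_minimal)
  then have "v \<notin> vs1.span B"
    using assms by blast
  then have indep: "vs1.independent (insert v B)"
    using B(2) by (rule vs1.independent_insertI)
  then obtain g where g: "Vector_Spaces.linear s1 s2 g" "\<forall>x\<in>insert v B. g x = (if x = v then w else 0)"
    using linear_independent_extend[OF indep, of "\<lambda>x. if x = v then w else 0"] by blast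
  have "v \<notin> B"
    using \<open>v \<notin> vs1.span B\<close> vs1.span_base by blast
  then have "g b = 0" if "b \<in> B" for b
    using g(2) that by auto
  then have "g u = 0" if "u \<in> vs1.span U" for u
    using linear_eq_0_on_span[OF g(1)] B(3) that by blast
  with g show ?thesis
    by auto
qed

definition scale_fun :: "'f::field \<Rightarrow> ('x \<Rightarrow> 'f) \<Rightarrow> 'x \<Rightarrow> 'f" where
  "scale_fun c v = (\<lambda>x. c * v x)"

global_interpretation fun_space: vector_space "scale_fun :: 'f::field \<Rightarrow> ('x \<Rightarrow> 'f) \<Rightarrow> 'x \<Rightarrow> 'f"
  by unfold_locales (auto simp: scale_fun_def fun_eq_iff algebra_simps)

global_interpretation fun_space_dual:
  vector_space_pair "scale_fun :: 'f::field \<Rightarrow> ('x \<Rightarrow> 'f) \<Rightarrow> 'x \<Rightarrow> 'f" "(*) :: 'f \<Rightarrow> 'f \<Rightarrow> 'f"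
  by unfold_locales (auto simp: scale_fun_def fun_eq_iff algebra_simps)

definition column :: "('x \<Rightarrow> 'f::zero) set \<Rightarrow> 'x \<Rightarrow> ('x \<Rightarrow> 'f) \<Rightarrow> 'f" where
  "column E a = (\<lambda>x. if x \<in> E then x a else 0)"

definition unit_vec :: "'b \<Rightarrow> 'b \<Rightarrow> 'f::zero_neq_one" where
  "unit_vec e = (\<lambda>x. if x = e then 1 else 0)"

lemma inj_unit_vec: "inj (unit_vec :: 'b \<Rightarrow> 'b \<Rightarrow> 'f::zero_neq_one)"
proof (rule injI)
  fix e e' :: 'b
  assume "(unit_vec e :: 'b \<Rightarrow> 'f) = unit_vec e'"
  then have "(unit_vec e e :: 'f) = unit_vec e' e"
    by simp
  then show "e = e'"
    by (simp add: unit_vec_def split: if_splits)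
qed

lemma sum_apply: "(\<Sum>i\<in>A. f i) x = (\<Sum>i\<in>A. f i x)"
  by (induction A rule: infinite_finite_induct) auto

lemma column_eq_sum_unit_vec:
  assumes "thin E"
  shows "column E a = (\<Sum>x\<in>{x \<in> E. x a \<noteq> 0}. scale_fun (x a) (unit_vec x))"
proof
  fix y
  have "(\<Sum>x\<in>{x \<in> E. x a \<noteq> 0}. scale_fun (x a) (unit_vec x)) y
      = (\<Sum>x\<in>{x \<in> E. x a \<noteq> 0}. if y = x then x a else 0)"
    unfolding sum_apply by (rule sum.cong) (auto simp: scale_fun_def unit_vec_def)
  also have "\<dots> = column E a y"
    using assms by (simp add: thin_def column_def)
  finally show "column E a y = (\<Sum>x\<in>{x \<in> E. x a \<noteq> 0}. scale_fun (x a) (unit_vec x)) y"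
    by simp
qed

lemma thin_subset:
  assumes "thin E" "X \<subseteq> E"
  shows "thin X"
  unfolding thin_def
proof
  fix a
  have "{x \<in> X. x a \<noteq> 0} \<subseteq> {x \<in> E. x a \<noteq> 0}"
    using assms(2) by blast
  then show "finite {x \<in> X. x a \<noteq> 0}"
    by (rule finite_subset) (use assms(1) in \<open>simp add: thin_def\<close>)
qed

lemma thinly_independent_iff:
  assumes "thin S"
  shows "thinly_independent S \<longleftrightarrow> (\<forall>\<beta>. thin_sum S \<beta> = (\<lambda>a. 0) \<longrightarrow> (\<forall>x\<in>S. \<beta> x = 0))"
proof
  assume "thinly_independent S"
  then show "\<forall>\<beta>. thin_sum S \<beta> = (\<lambda>a. 0) \<longrightarrow> (\<forall>x\<in>S. \<beta> x = 0)"
    using assms unfolding thinly_independent_def by blast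
next
  assume S: "\<forall>\<beta>. thin_sum S \<beta> = (\<lambda>a. 0) \<longrightarrow> (\<forall>x\<in>S. \<beta> x = 0)"
  show "thinly_independent S"
    unfolding thinly_independent_def
  proof (intro allI impI ballI)
    fix X \<alpha> x
    assume X: "X \<subseteq> S" "thin_sum X \<alpha> = (\<lambda>a. 0)" and "x \<in> X"
    define \<beta> where "\<beta> x = (if x \<in> X then \<alpha> x else 0)" for x
    have "thin_sum S \<beta> a = thin_sum X \<alpha> a" for a
      unfolding thin_sum_def
      by (rule sum.mono_neutral_cong_right) (use assms X(1) in \<open>auto simp: thin_def \<beta>_def\<close>)
    then have "thin_sum S \<beta> = (\<lambda>a. 0)"
      using X(2) by (simp add: fun_eq_iff)
    then have "\<beta> x = 0"
      using S \<open>x \<in> X\<close> X(1) by blast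
    then show "\<alpha> x = 0"
      using \<open>x \<in> X\<close> by (simp add: \<beta>_def)
  qed
qed

definition annihilated_by :: "'x set \<Rightarrow> ('x \<Rightarrow> 'f::field) \<Rightarrow> ('x \<Rightarrow> 'f) set" where
  "annihilated_by S \<beta> = {w. finite {x \<in> S. w x \<noteq> 0} \<and> (\<Sum>x\<in>{x \<in> S. w x \<noteq> 0}. \<beta> x * w x) = 0}"

lemma subspace_annihilated_by: "fun_space.subspace (annihilated_by S \<beta>)"
proof -
  let ?supp = "\<lambda>w. {x \<in> S. w x \<noteq> 0}"
  let ?pair = "\<lambda>w. \<Sum>x\<in>?supp w. \<beta> x * w x"
  have pair_eq: "(\<Sum>x\<in>F. \<beta> x * w x) = ?pair w" if "finite F" "?supp w \<subseteq> F" "F \<subseteq> S" for F w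
    by (rule sum.mono_neutral_right) (use that in auto)
  show ?thesis
    unfolding fun_space.subspace_def annihilated_by_def
  proof (intro conjI ballI allI)
    show "0 \<in> {w. finite (?supp w) \<and> ?pair w = 0}"
      by simp
  next
    fix w1 w2
    assume "w1 \<in> {w. finite (?supp w) \<and> ?pair w = 0}" "w2 \<in> {w. finite (?supp w) \<and> ?pair w = 0}"
    then have w: "finite (?supp w1)" "?pair w1 = 0" "finite (?supp w2)" "?pair w2 = 0"
      by simp_all
    let ?F = "?supp w1 \<union> ?supp w2"
    have supp: "?supp (w1 + w2) \<subseteq> ?F"
      by auto
    have "?pair (w1 + w2) = (\<Sum>x\<in>?F. \<beta> x * (w1 + w2) x)"
    proof (rule pair_eq[symmetric])
      show "finite ?F" using w(1,3) by simp
      show "?supp (w1 + w2) \<subseteq> ?F" by (fact supp)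
      show "?F \<subseteq> S" by blast
    qed
    also have "\<dots> = (\<Sum>x\<in>?F. \<beta> x * w1 x) + (\<Sum>x\<in>?F. \<beta> x * w2 x)"
      by (simp only: plus_fun_apply distrib_left sum.distrib)
    also have "\<dots> = ?pair w1 + ?pair w2"
      using pair_eq[of ?F w1] pair_eq[of ?F w2] w(1,3) by auto
    finally have "?pair (w1 + w2) = 0"
      using w by simp
    moreover have "finite (?supp (w1 + w2))"
      using supp by (rule finite_subset) (use w in simp)
    ultimately show "w1 + w2 \<in> {w. finite (?supp w) \<and> ?pair w = 0}"
      by simp
  next
    fix c w
    assume "w \<in> {w. finite (?supp w) \<and> ?pair w = 0}"
    then have w: "finite (?supp w)" "?pair w = 0"
      by simp_all
    have supp: "?supp (scale_fun c w) \<subseteq> ?supp w"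
      by (auto simp: scale_fun_def)
    have "?pair (scale_fun c w) = (\<Sum>x\<in>?supp w. \<beta> x * scale_fun c w x)"
      using pair_eq[of "?supp w" "scale_fun c w"] w(1) supp by auto
    also have "\<dots> = c * ?pair w"
      unfolding sum_distrib_left by (rule sum.cong) (simp_all add: scale_fun_def mult.left_commute)
    finally have "?pair (scale_fun c w) = 0"
      using w(2) by simp
    moreover have "finite (?supp (scale_fun c w))"
      using supp w(1) by (rule finite_subset)
    ultimately show "scale_fun c w \<in> {w. finite (?supp w) \<and> ?pair w = 0}"
      by simp
  qed
qed

lemma thinly_independent_if_unit_vec_in_span:
  fixes E :: "('a \<Rightarrow> 'f::field) set"
  assumes "thin E" "S \<subseteq> E"
    and span: "unit_vec ` S \<subseteq> fun_space.span (range (column E) \<union> unit_vec ` (E - S))"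
  shows "thinly_independent S"
proof -
  have "thin S"
    using assms(1,2) by (rule thin_subset)
  show ?thesis
    unfolding thinly_independent_iff[OF \<open>thin S\<close>]
  proof (intro allI impI ballI)
    fix \<beta> e
    assume rel: "thin_sum S \<beta> = (\<lambda>a. 0)" and "e \<in> S"
    have "column E a \<in> annihilated_by S \<beta>" for a
    proof -
      have "{x \<in> S. column E a x \<noteq> 0} = {x \<in> S. x a \<noteq> 0}"
        using assms(2) by (auto simp: column_def)
      moreover have "(\<Sum>x\<in>{x \<in> S. x a \<noteq> 0}. \<beta> x * column E a x) = thin_sum S \<beta> a"
        unfolding thin_sum_def using assms(2) by (intro sum.cong) (auto simp: column_def)
      ultimately show ?thesis
        using \<open>thin S\<close> rel unfolding annihilated_by_def thin_def by (simp add: fun_eq_iff)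
    qed
    moreover have "unit_vec f \<in> annihilated_by S \<beta>" if "f \<in> E - S" for f
    proof -
      have supp: "{x \<in> S. (unit_vec f x :: 'f) \<noteq> 0} = {}"
        using that by (auto simp: unit_vec_def)
      show ?thesis
        unfolding annihilated_by_def mem_Collect_eq supp by simp
    qed
    ultimately have "fun_space.span (range (column E) \<union> unit_vec ` (E - S)) \<subseteq> annihilated_by S \<beta>"
      by (intro fun_space.span_minimal subspace_annihilated_by) auto
    then have "unit_vec e \<in> annihilated_by S \<beta>"
      using span \<open>e \<in> S\<close> by blast
    moreover have "{x \<in> S. (unit_vec e x :: 'f) \<noteq> 0} = {e}"
      using \<open>e \<in> S\<close> by (auto simp: unit_vec_def)
    ultimately show "\<beta> e = 0"
      unfolding annihilated_by_def by (simp add: unit_vec_def)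
  qed
qed

lemma unit_vec_in_span_if_thinly_independent:
  assumes "thin E" "S \<subseteq> E" "thinly_independent S" "e \<in> S"
  shows "unit_vec e \<in> fun_space.span (range (column E) \<union> unit_vec ` (E - S))"
proof (rule ccontr)
  let ?U = "range (column E) \<union> unit_vec ` (E - S)"
  assume notin: "unit_vec e \<notin> fun_space.span ?U"
  obtain g where g: "Vector_Spaces.linear scale_fun (*) g"
      "\<forall>u\<in>fun_space.span ?U. g u = 0" "g (unit_vec e) = 1"
    using fun_space_dual.linear_vanishing_on_span_exists[OF notin, where w = 1] by blast
  define \<alpha> where "\<alpha> x = g (unit_vec x)" for x
  have "thin_sum S \<alpha> = (\<lambda>a. 0)"
  proof
    fix a
    have "column E a \<in> fun_space.span ?U"
      by (rule fun_space.span_base) simp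
    then have "g (column E a) = 0"
      using g(2) by blast
    moreover have "g (column E a) = (\<Sum>x\<in>{x \<in> E. x a \<noteq> 0}. \<alpha> x * x a)"
      unfolding column_eq_sum_unit_vec[OF assms(1)] fun_space_dual.linear_sum[OF g(1)]
      by (simp add: fun_space_dual.linear_scale[OF g(1)] \<alpha>_def mult.commute)
    moreover have "\<alpha> x = 0" if "x \<in> E - S" for x
    proof -
      have "unit_vec x \<in> fun_space.span ?U"
        by (rule fun_space.span_base) (use that in blast)
      then show ?thesis
        using g(2) unfolding \<alpha>_def by blast
    qed
    then have "(\<Sum>x\<in>{x \<in> E. x a \<noteq> 0}. \<alpha> x * x a) = thin_sum S \<alpha> a"
      unfolding thin_sum_def
      by (intro sum.mono_neutral_right) (use assms(1,2) in \<open>auto simp: thin_def\<close>)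
    ultimately show "thin_sum S \<alpha> a = 0"
      by simp
  qed
  moreover have "thin S"
    using assms(1,2) by (rule thin_subset)
  ultimately have "\<alpha> e = 0"
    using assms(3,4) thinly_independent_iff by blast
  with g(3) show False
    by (simp add: \<alpha>_def)
qed

lemma thinly_independent_eq_coindep:
  assumes "thin E"
  shows "{S. S \<subseteq> E \<and> thinly_independent S} = fun_space.coindep (range (column E)) unit_vec E"
  unfolding fun_space.coindep_def
proof (rule Collect_cong, rule conj_cong)
  fix S
  assume "S \<subseteq> E"
  let ?span = "fun_space.span (range (column E) \<union> unit_vec ` (E - S))"
  have "unit_vec ` (E - S) \<subseteq> ?span"
    by (rule subset_trans[OF _ fun_space.span_superset]) blast
  moreover have "E = S \<union> (E - S)"
    using \<open>S \<subseteq> E\<close> by blast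
  ultimately have "unit_vec ` E \<subseteq> ?span \<longleftrightarrow> unit_vec ` S \<subseteq> ?span"
    by (metis image_Un Un_subset_iff)
  also have "\<dots> \<longleftrightarrow> thinly_independent S"
    using thinly_independent_if_unit_vec_in_span[OF assms \<open>S \<subseteq> E\<close>]
      unit_vec_in_span_if_thinly_independent[OF assms \<open>S \<subseteq> E\<close>] by blast
  finally show "thinly_independent S \<longleftrightarrow> unit_vec ` E \<subseteq> ?span"
    by blast
qed simp

theorem theorem6p1:
  fixes E :: "('a \<Rightarrow> 'f::field) set"
  assumes "thin E"
  shows "matroid E {S. S \<subseteq> E \<and> thinly_independent S}"
proof -
  have "inj_on unit_vec E"
    using inj_unit_vec by (rule inj_on_subset) simp
  then have "matroid E (fun_space.coindep (range (column E)) unit_vec E)"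
    by (rule fun_space.matroid_coindep)
  then show ?thesis
    by (simp add: thinly_independent_eq_coindep[OF assms])
qed

end
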